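(* Let $c_0$ be a positive integer and let $\kappa_0\in\overline{\mathbb{Z}}_p$ satisfy condition $( * )$. Then there exists an increasing sequence of positive integers $(k_i)_{i\ge0}$ such that for each $i$: (a) $k_i-1>c_0(2+\log_p k_{i+1})$, and (b) no integer in $\{k_i,k_i+1,\dots,k_{i+1}-1\}$ is congruent to $\kappa_0$ modulo $p^{\lceil\log_p k_{i+1}\rceil}$ (i.e. for no such integer $k$ does $k-\kappa_0$ lie in $p^{\lceil\log_p k_{i+1}\rceil}\overline{\mathbb{Z}}_p$).
   Context: For $\lambda\in\mathbb{Z}_p$ and $m\ge1$, let $\lambda^{\{m\}}$ denote the unique integer in $\{0,1,\dots,p^m-1\}$ congruent to $\lambda$ modulo $p^m$. An element $\lambda\in\overline{\mathbb{Z}}_p$ satisfies condition $( * )$ if one of the following holds: (1) $\lambda\notin\mathbb{Z}_p$; (2) $\lambda\in\mathbb{Z}_p\setminus\mathbb{N}$ and $\lambda^{\{m\}}/m\to\infty$ as $m\to\infty$; (3) $\lambda\in\mathbb{N}$. *)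

theory Defs
  imports "HOL-Analysis.Analysis" "HOL-Computational_Algebra.Primes"
begin

text \<open>Abstract model of the ring of integers of an algebraic closure of Q_p:
  a commutative ring R with a p-adic valuation v (normalised by v(p) = 1,
  integral: v >= 0), which is a valuation ring (v x <= v y, x nonzero, implies x divides y).
  The genuine ring of integers of the algebraic closure of Q_p with its (rational-valued)
  normalised valuation satisfies all of these axioms.\<close>
definition padic_valuation_ring :: "nat \<Rightarrow> ('a::comm_ring_1 \<Rightarrow> ereal) \<Rightarrow> bool" where
  "padic_valuation_ring p v \<longleftrightarrow>
     (\<forall>x. v x = \<infinity> \<longleftrightarrow> x = 0) \<and>
     (\<forall>x. v x \<ge> 0) \<and>
     (\<forall>x y. v (x * y) = v x + v y) \<and>
     (\<forall>x y. v (x + y) \<ge> min (v x) (v y)) \<and>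
     v (of_nat p) = 1 \<and>
     (\<forall>x y. x \<noteq> 0 \<longrightarrow> v x \<le> v y \<longrightarrow> x dvd y)"

definition in_pow_ideal :: "nat \<Rightarrow> nat \<Rightarrow> 'a::comm_ring_1 \<Rightarrow> bool" where
  "in_pow_ideal p m x \<longleftrightarrow> (of_nat p) ^ m dvd x"

text \<open>Z_p inside R: the p-adic closure of Z\<close>
definition in_Zp :: "nat \<Rightarrow> 'a::comm_ring_1 \<Rightarrow> bool" where
  "in_Zp p l \<longleftrightarrow> (\<forall>m. \<exists>n::int. in_pow_ideal p m (l - of_int n))"

definition trunc_rep :: "nat \<Rightarrow> 'a::comm_ring_1 \<Rightarrow> nat \<Rightarrow> nat" where
  "trunc_rep p l m = (THE n. n < p ^ m \<and> in_pow_ideal p m (l - of_nat n))"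

definition cond_star :: "nat \<Rightarrow> 'a::comm_ring_1 \<Rightarrow> bool" where
  "cond_star p l \<longleftrightarrow>
     \<not> in_Zp p l \<or>
     (in_Zp p l \<and> l \<notin> range of_nat \<and>
        filterlim (\<lambda>m. real (trunc_rep p l m) / real m) at_top sequentially) \<or>
     l \<in> range of_nat"

end

theory Submission
  imports Defs "HOL-Real_Asymp.Real_Asymp"
begin

text \<open>If \<kappa> is not in Z_p, or is a natural number n, then beyond some bound (p^m0 with
  p^m0 dividing no \<kappa> - n, resp. n + 1) no integer j is congruent to \<kappa> modulo a power of p
  exceeding j; then a run k_i = N + i of large consecutive integers works, (a) being a
  log-versus-linear estimate.

  Otherwise the truncations \<kappa>^{m} are the partial sums of a p-adic digit expansion:
  \<kappa>^{m} = \<kappa>^{m+1} mod p^m. At a change point t, where \<kappa>^{t+1} \<noteq> \<kappa>^{t} > 0, this forces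
  p^t < \<kappa>^{t+1} < p^(t+1), so the exponent in (b) is t + 1, and \<kappa>^{t+1} is the only integer
  below p^(t+1) congruent to \<kappa> modulo p^(t+1). As \<kappa>^{m}/m \<rightarrow> \<infinity>, there are infinitely many
  change points s_0 < s_1 < ..., and k_i = \<kappa>^{s_i+1} = \<kappa>^{s_(i+1)} works: (b) since every
  j < k_(i+1) lies below that unique representative, and (a) since k_i \<ge> (4 c0 + 1) s_(i+1)
  while log_p k_(i+1) < s_(i+1) + 1.\<close>

definition avoiding_sequence :: "nat \<Rightarrow> nat \<Rightarrow> 'a::comm_ring_1 \<Rightarrow> (nat \<Rightarrow> nat) \<Rightarrow> bool" where
  "avoiding_sequence p c0 \<kappa> k \<longleftrightarrow> strict_mono k \<and> (\<forall>i. k i > 0) \<and>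
     (\<forall>i. real (k i) - 1 > real c0 * (2 + log (real p) (real (k (Suc i))))) \<and>
     (\<forall>i j. k i \<le> j \<and> j < k (Suc i) \<longrightarrow>
        \<not> in_pow_ideal p (nat \<lceil>log (real p) (real (k (Suc i)))\<rceil>) (of_nat j - \<kappa>))"

lemma le_power_nat_ceiling_log:
  fixes b k :: nat
  assumes "1 < b" "0 < k"
  shows "k \<le> b ^ nat \<lceil>log b k\<rceil>"
proof -
  have "real k = b powr log b k" using assms by simp
  also have "\<dots> \<le> b powr real (nat \<lceil>log b k\<rceil>)"
    using assms by (intro powr_mono) (auto simp: of_nat_nat ceiling_correct)
  also have "\<dots> = real (b ^ nat \<lceil>log b k\<rceil>)"
    using assms by (subst powr_realpow) auto
  finally show ?thesis by linarith
qed

lemma exists_avoiding_sequence_if_eventually_incongruent: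
  fixes p c0 :: nat and \<kappa> :: "'a::comm_ring_1"
  assumes "1 < p"
    and incongruent: "\<And>j M. N0 \<le> j \<Longrightarrow> j < p ^ M \<Longrightarrow> \<not> in_pow_ideal p M (of_nat j - \<kappa>)"
  shows "\<exists>k. avoiding_sequence p c0 \<kappa> k"
proof -
  have "eventually (\<lambda>n. real c0 * (2 + log p (real n + 1)) < real n - 1) sequentially"
    using assms(1) by real_asymp
  then obtain N where N: "\<And>n. N \<le> n \<Longrightarrow> real c0 * (2 + log p (real n + 1)) < real n - 1"
    unfolding eventually_sequentially by blast
  define k where "k i = max N N0 + i + 1" for i
  have "real c0 * (2 + log p (k (Suc i))) < real (k i) - 1" for i
    using N[of "k i"] by (simp add: k_def add_ac)
  moreover have "\<not> in_pow_ideal p (nat \<lceil>log p (k (Suc i))\<rceil>) (of_nat j - \<kappa>)"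
    if "k i \<le> j" "j < k (Suc i)" for i j
  proof (rule incongruent)
    show "N0 \<le> j" using that by (simp add: k_def)
    show "j < p ^ nat \<lceil>log p (k (Suc i))\<rceil>"
      using that le_power_nat_ceiling_log[OF assms(1), of "k (Suc i)"] by (simp add: k_def)
  qed
  ultimately have "avoiding_sequence p c0 \<kappa> k"
    unfolding avoiding_sequence_def by (auto simp: k_def strict_mono_def)
  then show ?thesis by blast
qed

lemma log_less_if_linear_lower_bound:
  fixes p c0 S k k' :: nat
  assumes "1 < p" "2 \<le> S" "(4 * c0 + 1) * S \<le> k" "0 < k'" "k' < p ^ Suc S"
  shows "real c0 * (2 + log p k') < real k - 1"
proof -
  have "real k' < real p ^ Suc S"
    using assms(5) by (metis of_nat_less_iff of_nat_power)
  then have "log p k' < real (Suc S)"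
    using assms(1,4) by (intro log_of_power_less) simp_all
  then have "real c0 * (2 + log p k') \<le> real c0 * (real S + 3)"
    by (intro mult_left_mono) simp_all
  also have "\<dots> < (4 * real c0 + 1) * real S - 1"
  proof -
    have "0 < (3 * real c0 + 1) * (real S - 1)"
      using assms(2) by (simp add: add_pos_nonneg)
    then show ?thesis by (simp add: algebra_simps)
  qed
  also have "\<dots> \<le> real k - 1"
  proof -
    have "real ((4 * c0 + 1) * S) \<le> real k"
      using assms(3) by (simp only: of_nat_le_iff)
    then show ?thesis by (simp add: algebra_simps)
  qed
  finally show ?thesis .
qed

lemma change_point_sequence:
  fixes a :: "nat \<Rightarrow> 'b"
  assumes "\<And>m. \<exists>t>m. a (Suc t) \<noteq> a t"
  obtains s where "strict_mono s" "m < s 0"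
    "\<And>i. a (Suc (s i)) \<noteq> a (s i)" "\<And>i. a (s (Suc i)) = a (Suc (s i))"
proof -
  have next_change: "\<exists>y>x. a (Suc y) \<noteq> a y \<and> a y = a (Suc x)" for x
  proof -
    obtain y where y: "x < y" "a (Suc y) \<noteq> a y"
      and before: "\<And>t. x < t \<Longrightarrow> t < y \<Longrightarrow> a (Suc t) = a t"
      using assms[of x] exists_least_iff[of "\<lambda>t. x < t \<and> a (Suc t) \<noteq> a t"] by blast
    have const: "a t = a (Suc x)" if "Suc x \<le> t" "t \<le> y" for t
      using that
    proof (induction t rule: dec_induct)
      case (step n)
      then have "a (Suc n) = a n" by (intro before) auto
      with step show ?case by simp
    qed simp
    have "a y = a (Suc x)" using const[of y] y(1) by simp
    with y show ?thesis by blast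
  qed
  have "\<exists>s. \<forall>n. (m < s n \<and> a (Suc (s n)) \<noteq> a (s n)) \<and>
      (s n < s (Suc n) \<and> a (s (Suc n)) = a (Suc (s n)))"
  proof (rule dependent_nat_choice)
    show "\<exists>t. m < t \<and> a (Suc t) \<noteq> a t" using assms[of m] by blast
    show "\<exists>t'. (m < t' \<and> a (Suc t') \<noteq> a t') \<and> t < t' \<and> a t' = a (Suc t)"
      if "m < t \<and> a (Suc t) \<noteq> a t" for t n :: nat
      using next_change[of t] that by (auto intro: less_trans)
  qed
  then obtain s where s: "\<And>n. m < s n" "\<And>n. a (Suc (s n)) \<noteq> a (s n)"
    "\<And>n. s n < s (Suc n)" "\<And>n. a (s (Suc n)) = a (Suc (s n))"
    by blast
  show ?thesis
    by (rule that[of s]) (use s in \<open>auto simp: strict_mono_Suc_iff\<close>)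
qed

lemma infinitely_many_changes_if_tendsto_at_top:
  fixes a :: "nat \<Rightarrow> nat"
  assumes "filterlim a at_top sequentially"
  shows "\<exists>t>m. a (Suc t) \<noteq> a t"
proof (rule ccontr)
  assume no_change: "\<not> (\<exists>t>m. a (Suc t) \<noteq> a t)"
  have const: "a t = a (Suc m)" if "Suc m \<le> t" for t
    using that
  proof (induction t rule: dec_induct)
    case (step n)
    then have "a (Suc n) = a n" using no_change by auto
    with step show ?case by simp
  qed simp
  have "eventually (\<lambda>t. Suc (a (Suc m)) \<le> a t) sequentially"
    using assms by (simp add: filterlim_at_top)
  then obtain N where N: "\<And>t. N \<le> t \<Longrightarrow> Suc (a (Suc m)) \<le> a t"
    by (auto simp: eventually_sequentially)
  have "Suc (a (Suc m)) \<le> a (N + Suc m)" by (rule N) simp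
  with const[of "N + Suc m"] show False by simp
qed

lemma superlinear_eventually_ge:
  fixes a :: "nat \<Rightarrow> nat"
  assumes "filterlim (\<lambda>m. real (a m) / real m) at_top sequentially"
  shows "eventually (\<lambda>m. C * m \<le> a m) sequentially"
proof -
  have "eventually (\<lambda>m. 0 < m \<and> real C \<le> real (a m) / real m) sequentially"
    using eventually_gt_at_top assms unfolding filterlim_at_top by (intro eventually_conj) auto
  then show ?thesis
  proof eventually_elim
    case (elim m)
    then have "real C * real m \<le> real (a m)"
      using pos_le_divide_eq[of "real m" "real C" "real (a m)"] by simp
    then show ?case by (metis of_nat_le_iff of_nat_mult)
  qed
qed

lemma superlinear_change_point_sequence:
  fixes a :: "nat \<Rightarrow> nat"
  assumes "filterlim (\<lambda>m. real (a m) / real m) at_top sequentially"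
  obtains s where "strict_mono s" "\<And>i. 2 \<le> s i" "\<And>i. C * s i \<le> a (s i)"
    "\<And>i. a (Suc (s i)) \<noteq> a (s i)" "\<And>i. a (s (Suc i)) = a (Suc (s i))"
proof -
  have "eventually (\<lambda>m. 2 \<le> m \<and> C * m \<le> a m) sequentially"
    using eventually_ge_at_top superlinear_eventually_ge[OF assms] by (rule eventually_conj)
  then obtain m1 where m1: "\<And>m. m1 \<le> m \<Longrightarrow> 2 \<le> m \<and> C * m \<le> a m"
    unfolding eventually_sequentially by blast
  have "filterlim a at_top sequentially"
    using superlinear_eventually_ge[OF assms, of 1]
    by (intro filterlim_at_top_mono[OF filterlim_ident]) simp
  then have "\<And>m. \<exists>t>m. a (Suc t) \<noteq> a t" by (rule infinitely_many_changes_if_tendsto_at_top)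
  then obtain s where s: "strict_mono s" "m1 < s 0"
    and "\<And>i. a (Suc (s i)) \<noteq> a (s i)" "\<And>i. a (s (Suc i)) = a (Suc (s i))"
    using change_point_sequence[of a m1] by blast
  moreover have "m1 \<le> s i" for i
    using s strict_mono_less_eq[OF s(1), of 0 i] by simp
  ultimately show ?thesis using that m1 by blast
qed

lemma in_pow_ideal_minus_commute: "in_pow_ideal p m (x - y) \<longleftrightarrow> in_pow_ideal p m (y - x)"
  unfolding in_pow_ideal_def by (metis dvd_minus_iff minus_diff_eq)

lemma in_pow_ideal_mono:
  assumes "k \<le> m" "in_pow_ideal p m x"
  shows "in_pow_ideal p k x"
  using assms unfolding in_pow_ideal_def by (meson dvd_trans le_imp_power_dvd)

lemma eventually_not_in_pow_ideal_if_not_in_Zp: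
  fixes \<kappa> :: "'a::comm_ring_1"
  assumes "1 < p" "\<not> in_Zp p \<kappa>"
  obtains N0 where "\<And>j M. N0 \<le> j \<Longrightarrow> j < p ^ M \<Longrightarrow> \<not> in_pow_ideal p M (of_nat j - \<kappa>)"
proof -
  obtain m0 where m0: "\<And>n::int. \<not> in_pow_ideal p m0 (\<kappa> - of_int n)"
    using assms(2) unfolding in_Zp_def by blast
  show thesis
  proof (rule that[of "p ^ m0"], rule notI)
    fix j M assume "p ^ m0 \<le> j" "j < p ^ M" and "in_pow_ideal p M (of_nat j - \<kappa>)"
    then have "m0 \<le> M"
      using assms(1) power_less_imp_less_exp[of p m0 M] by linarith
    moreover have "in_pow_ideal p M (\<kappa> - of_int (int j))"
      using \<open>in_pow_ideal p M (of_nat j - \<kappa>)\<close> by (simp add: in_pow_ideal_minus_commute)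
    ultimately show False using m0 in_pow_ideal_mono by blast
  qed
qed

locale padic_integers =
  fixes p :: nat and v :: "'a::comm_ring_1 \<Rightarrow> ereal"
  assumes prime: "prime p" and valuation: "padic_valuation_ring p v"
begin

lemma v_eq_infinity_iff: "v x = \<infinity> \<longleftrightarrow> x = 0"
  and v_nonneg: "0 \<le> v x"
  and v_mult: "v (x * y) = v x + v y"
  and v_add: "min (v x) (v y) \<le> v (x + y)"
  and v_p: "v (of_nat p) = 1"
  using valuation unfolding padic_valuation_ring_def by auto

lemma v_one: "v 1 = 0"
proof -
  have "(1::'a) \<noteq> 0"
  proof
    assume "(1::'a) = 0"
    then have "(of_nat p :: 'a) = 0" by (metis mult_1 mult_zero_left)
    then show False using v_p v_eq_infinity_iff[of "of_nat p"] by simp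
  qed
  then have "v 1 \<noteq> \<infinity>" by (simp add: v_eq_infinity_iff)
  moreover have "v 1 = v 1 + v 1" using v_mult[of 1 1] by simp
  ultimately show ?thesis using v_nonneg[of 1] by (cases "v 1") auto
qed

lemma v_p_power: "v (of_nat p ^ n) = ereal (real n)"
proof (induction n)
  case 0
  then show ?case by (simp add: v_one zero_ereal_def)
next
  case (Suc n)
  then show ?case by (simp add: v_mult v_p one_ereal_def)
qed

lemma v_of_nat_not_dvd:
  assumes "\<not> p dvd s"
  shows "v (of_nat s) = 0"
proof (rule ccontr)
  assume "v (of_nat s) \<noteq> 0"
  then have pos: "0 < v (of_nat s)" using v_nonneg[of "of_nat s"] by simp
  have "coprime (int s) (int p)"
    using assms prime by (simp add: prime_imp_coprime coprime_commute)
  then obtain x y where "x * int s + y * int p = 1"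
    using bezout_int[of "int s" "int p"] by auto
  then have "1 = of_nat s * of_int x + of_nat p * (of_int y :: 'a)"
    by (metis mult.commute of_int_1 of_int_add of_int_mult of_int_of_nat_eq)
  then have "min (v (of_nat s * of_int x)) (v (of_nat p * of_int y)) \<le> v 1"
    using v_add[of "of_nat s * of_int x" "of_nat p * of_int y"] by simp
  moreover have "0 < v (of_nat s * of_int x)"
    using pos v_nonneg[of "of_int x"] by (simp add: v_mult add_pos_nonneg)
  moreover have "0 < v (of_nat p * of_int y)"
    using v_nonneg[of "of_int y"] by (simp add: v_mult v_p add_pos_nonneg)
  ultimately show False by (auto simp: v_one min_le_iff_disj)
qed

lemma v_of_nat:
  assumes "r \<noteq> 0"
  shows "v (of_nat r) = ereal (real (multiplicity p r))"
proof -
  obtain s where r: "r = p ^ multiplicity p r * s" and "\<not> p dvd s"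
    using multiplicity_decompose'[of r p] assms prime by (auto simp: prime_nat_iff)
  then have "v (of_nat r) = v (of_nat p ^ multiplicity p r) + v (of_nat s)"
    by (metis of_nat_mult of_nat_power v_mult)
  with \<open>\<not> p dvd s\<close> show ?thesis by (simp add: v_p_power v_of_nat_not_dvd)
qed

lemma p_power_dvd_of_nat_iff: "(of_nat p ^ m :: 'a) dvd of_nat r \<longleftrightarrow> p ^ m dvd r"
proof
  assume "(of_nat p ^ m :: 'a) dvd of_nat r"
  then obtain c :: 'a where c: "of_nat r = of_nat p ^ m * c" by (elim dvdE)
  show "p ^ m dvd r"
  proof (cases "r = 0")
    case False
    have "ereal (real m) \<le> v (of_nat r)"
      using v_nonneg[of c] by (simp add: c v_mult v_p_power ereal_le_add_self)
    then have "m \<le> multiplicity p r" using False by (simp add: v_of_nat)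
    then show ?thesis by (rule multiplicity_dvd')
  qed simp
next
  assume "p ^ m dvd r"
  then obtain c where "r = p ^ m * c" by (elim dvdE)
  then show "(of_nat p ^ m :: 'a) dvd of_nat r" by simp
qed

lemma p_power_dvd_of_int_iff: "(of_nat p ^ m :: 'a) dvd of_int d \<longleftrightarrow> int p ^ m dvd d"
proof -
  have "(of_nat p ^ m :: 'a) dvd of_int d \<longleftrightarrow> (of_nat p ^ m :: 'a) dvd of_nat (nat \<bar>d\<bar>)"
  proof (cases "0 \<le> d")
    case False
    then have "(of_int d :: 'a) = - of_nat (nat \<bar>d\<bar>)" by simp
    then show ?thesis by (simp only: dvd_minus_iff)
  qed simp
  also have "\<dots> \<longleftrightarrow> p ^ m dvd nat \<bar>d\<bar>"
    by (rule p_power_dvd_of_nat_iff)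
  also have "\<dots> \<longleftrightarrow> int p ^ m dvd d"
    by (metis abs_ge_zero dvd_abs_iff int_dvd_int_iff nat_0_le of_nat_power)
  finally show ?thesis .
qed

lemma in_pow_ideal_diff_of_int_iff:
  fixes \<kappa> :: 'a
  assumes "in_pow_ideal p m (\<kappa> - of_int a)"
  shows "in_pow_ideal p m (\<kappa> - of_int b) \<longleftrightarrow> a mod int p ^ m = b mod int p ^ m"
proof -
  have diff: "\<kappa> - of_int b = (\<kappa> - of_int a) + of_int (a - b)" by simp
  have "in_pow_ideal p m (\<kappa> - of_int b) \<longleftrightarrow> (of_nat p ^ m :: 'a) dvd of_int (a - b)"
    using assms unfolding in_pow_ideal_def diff by (rule dvd_add_right_iff)
  also have "\<dots> \<longleftrightarrow> a mod int p ^ m = b mod int p ^ m"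
    by (simp only: p_power_dvd_of_int_iff mod_eq_dvd_iff)
  finally show ?thesis .
qed

lemma trunc_rep_eqI:
  fixes \<kappa> :: 'a
  assumes "n < p ^ m" "in_pow_ideal p m (\<kappa> - of_nat n)"
  shows "trunc_rep p \<kappa> m = n"
  unfolding trunc_rep_def
proof (rule the_equality)
  fix n' assume n': "n' < p ^ m \<and> in_pow_ideal p m (\<kappa> - of_nat n')"
  have "int n' mod int p ^ m = int n mod int p ^ m"
    using in_pow_ideal_diff_of_int_iff[of m \<kappa> "int n'" "int n"] n' assms by simp
  then show "n' = n"
    using n' assms by (simp flip: of_nat_power)
qed (use assms in simp)

lemma trunc_rep:
  fixes \<kappa> :: 'a
  assumes "in_Zp p \<kappa>"
  shows "trunc_rep p \<kappa> m < p ^ m" "in_pow_ideal p m (\<kappa> - of_nat (trunc_rep p \<kappa> m))"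
proof -
  obtain n :: int where n: "in_pow_ideal p m (\<kappa> - of_int n)"
    using assms unfolding in_Zp_def by blast
  define r where "r = nat (n mod int p ^ m)"
  have r: "int r = n mod int p ^ m" "r < p ^ m"
    using prime_gt_0_nat[OF prime] by (simp_all add: r_def nat_less_iff)
  then have "in_pow_ideal p m (\<kappa> - of_int (int r))"
    using in_pow_ideal_diff_of_int_iff[OF n, of "int r"] by simp
  then have "in_pow_ideal p m (\<kappa> - of_nat r)" by simp
  moreover from this have "trunc_rep p \<kappa> m = r" using r(2) by (intro trunc_rep_eqI)
  ultimately show "trunc_rep p \<kappa> m < p ^ m" "in_pow_ideal p m (\<kappa> - of_nat (trunc_rep p \<kappa> m))"
    using r(2) by simp_all
qed

lemma trunc_rep_Suc_mod:
  fixes \<kappa> :: 'a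
  assumes "in_Zp p \<kappa>"
  shows "trunc_rep p \<kappa> (Suc m) mod p ^ m = trunc_rep p \<kappa> m"
proof -
  define b where "b = trunc_rep p \<kappa> (Suc m)"
  have "in_pow_ideal p m (\<kappa> - of_int (int b))"
    using trunc_rep(2)[OF assms, of "Suc m"] in_pow_ideal_mono[of m "Suc m"] by (simp add: b_def)
  then have "in_pow_ideal p m (\<kappa> - of_int (int b mod int p ^ m))"
    using in_pow_ideal_diff_of_int_iff[of m \<kappa> "int b" "int b mod int p ^ m"] by simp
  moreover have "(of_nat (b mod p ^ m) :: 'a) = of_int (int b mod int p ^ m)"
    by (metis of_int_of_nat_eq of_nat_mod of_nat_power)
  ultimately have "in_pow_ideal p m (\<kappa> - of_nat (b mod p ^ m))"
    by simp
  then have "trunc_rep p \<kappa> m = b mod p ^ m"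
    using prime_gt_0_nat[OF prime] by (intro trunc_rep_eqI) simp_all
  then show ?thesis by (simp add: b_def)
qed

lemma not_in_pow_ideal_of_nat_diff:
  assumes "n < j" "j < p ^ M"
  shows "\<not> in_pow_ideal p M (of_nat j - of_nat n :: 'a)"
proof
  assume "in_pow_ideal p M (of_nat j - of_nat n :: 'a)"
  moreover have "(of_nat j - of_nat n :: 'a) = of_nat (j - n)"
    using assms(1) by (simp add: of_nat_diff)
  ultimately have "p ^ M dvd j - n"
    unfolding in_pow_ideal_def by (simp add: p_power_dvd_of_nat_iff)
  then show False using assms by (auto dest: dvd_imp_le)
qed

lemma trunc_rep_change_point:
  fixes \<kappa> :: 'a
  assumes "in_Zp p \<kappa>" "trunc_rep p \<kappa> (Suc t) \<noteq> trunc_rep p \<kappa> t" "0 < trunc_rep p \<kappa> t"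
  shows "p ^ t < trunc_rep p \<kappa> (Suc t)" "nat \<lceil>log p (trunc_rep p \<kappa> (Suc t))\<rceil> = Suc t"
proof -
  let ?n = "trunc_rep p \<kappa> (Suc t)"
  have "?n mod p ^ t \<noteq> ?n" "0 < ?n mod p ^ t"
    using assms trunc_rep_Suc_mod[OF assms(1), of t] by simp_all
  then show below: "p ^ t < ?n"
    by (metis le_neq_implies_less mod_less mod_self not_le order_less_irrefl)
  have "?n < p ^ Suc t" by (rule trunc_rep(1)[OF assms(1)])
  with below have "\<lceil>log p ?n\<rceil> = int t + 1"
    using prime_ge_2_nat[OF prime] by (intro ceiling_log_nat_eq_if) simp_all
  then show "nat \<lceil>log p ?n\<rceil> = Suc t" by simp
qed

lemma not_in_pow_ideal_below_change_point:
  fixes \<kappa> :: 'a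
  assumes "in_Zp p \<kappa>" "trunc_rep p \<kappa> (Suc t) \<noteq> trunc_rep p \<kappa> t" "0 < trunc_rep p \<kappa> t"
    and "j < trunc_rep p \<kappa> (Suc t)"
  shows "\<not> in_pow_ideal p (nat \<lceil>log p (trunc_rep p \<kappa> (Suc t))\<rceil>) (of_nat j - \<kappa>)"
proof
  assume "in_pow_ideal p (nat \<lceil>log p (trunc_rep p \<kappa> (Suc t))\<rceil>) (of_nat j - \<kappa>)"
  then have "in_pow_ideal p (Suc t) (\<kappa> - of_nat j)"
    by (simp add: trunc_rep_change_point(2)[OF assms(1-3)] in_pow_ideal_minus_commute)
  moreover have "j < p ^ Suc t"
    using assms(4) trunc_rep(1)[OF assms(1), of "Suc t"] by linarith
  ultimately have "trunc_rep p \<kappa> (Suc t) = j" by (intro trunc_rep_eqI)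
  with assms(4) show False by simp
qed

lemma exists_avoiding_sequence_if_superlinear_trunc_rep:
  fixes \<kappa> :: 'a and c0 :: nat
  assumes Zp: "in_Zp p \<kappa>"
    and superlinear: "filterlim (\<lambda>m. real (trunc_rep p \<kappa> m) / real m) at_top sequentially"
  shows "\<exists>k. avoiding_sequence p c0 \<kappa> k"
proof -
  define a where "a = trunc_rep p \<kappa>"
  obtain s where grow: "\<And>i. 2 \<le> s i" "\<And>i. (4 * c0 + 1) * s i \<le> a (s i)"
    and change: "\<And>i. a (Suc (s i)) \<noteq> a (s i)" and stay: "\<And>i. a (s (Suc i)) = a (Suc (s i))"
    using superlinear_change_point_sequence[of a "4 * c0 + 1"] superlinear unfolding a_def by metis
  define k where "k i = a (Suc (s i))" for i
  have positive: "0 < a (s i)" for i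
    using grow[of i] by (metis add_gr_0 less_le_trans mult_pos_pos zero_less_one pos2)
  note change_point = trunc_rep_change_point[OF Zp change[unfolded a_def] positive[unfolded a_def]]
  have "k i < k (Suc i)" for i
  proof -
    have "k i < p ^ s (Suc i)"
      using trunc_rep(1)[OF Zp, of "s (Suc i)"] stay[of i] by (simp add: k_def a_def)
    also have "\<dots> < k (Suc i)" using change_point(1) by (simp add: k_def a_def)
    finally show ?thesis .
  qed
  moreover have "real c0 * (2 + log p (k (Suc i))) < real (k i) - 1" for i
  proof (rule log_less_if_linear_lower_bound)
    show "1 < p" using prime by (rule prime_gt_1_nat)
    show "2 \<le> s (Suc i)" "(4 * c0 + 1) * s (Suc i) \<le> k i"
      using grow[of "Suc i"] unfolding k_def stay[of i] by simp_all
    show "0 < k (Suc i)"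
      using change_point(1)[of "Suc i"] by (simp add: k_def a_def)
    show "k (Suc i) < p ^ Suc (s (Suc i))"
      unfolding k_def a_def by (rule trunc_rep(1)[OF Zp])
  qed
  moreover have "\<not> in_pow_ideal p (nat \<lceil>log p (k (Suc i))\<rceil>) (of_nat j - \<kappa>)"
    if "j < k (Suc i)" for i j
    using not_in_pow_ideal_below_change_point[OF Zp change[unfolded a_def] positive[unfolded a_def]]
      that by (simp add: k_def a_def)
  moreover have "0 < k i" for i
    using change_point(1)[of i] by (simp add: k_def a_def)
  ultimately have "avoiding_sequence p c0 \<kappa> k"
    unfolding avoiding_sequence_def by (simp add: strict_mono_Suc_iff)
  then show ?thesis by blast
qed

end

theorem lemma4p5:
  fixes p c0 :: nat and v :: "'a::comm_ring_1 \<Rightarrow> ereal" and \<kappa>0 :: 'a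
  assumes "prime p"
    and "padic_valuation_ring p v"
    and "c0 > 0"
    and "cond_star p \<kappa>0"
  shows "\<exists>k :: nat \<Rightarrow> nat. strict_mono k \<and> (\<forall>i. k i > 0) \<and>
     (\<forall>i. real (k i) - 1 > real c0 * (2 + log (real p) (real (k (Suc i))))) \<and>
     (\<forall>i. \<forall>j. k i \<le> j \<and> j < k (Suc i) \<longrightarrow>
        \<not> in_pow_ideal p (nat \<lceil>log (real p) (real (k (Suc i)))\<rceil>) (of_nat j - \<kappa>0))"
proof -
  interpret padic_integers p v
    using assms(1,2) by unfold_locales
  have p_gt_1: "1 < p" using assms(1) by (rule prime_gt_1_nat)
  have "\<exists>k. avoiding_sequence p c0 \<kappa>0 k"
    using assms(4) unfolding cond_star_def
  proof (elim disjE conjE)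
    assume "\<not> in_Zp p \<kappa>0"
    with p_gt_1 obtain N0 where
      "\<And>j M. N0 \<le> j \<Longrightarrow> j < p ^ M \<Longrightarrow> \<not> in_pow_ideal p M (of_nat j - \<kappa>0)"
      by (rule eventually_not_in_pow_ideal_if_not_in_Zp) blast
    with p_gt_1 show ?thesis by (rule exists_avoiding_sequence_if_eventually_incongruent)
  next
    assume "in_Zp p \<kappa>0" "filterlim (\<lambda>m. real (trunc_rep p \<kappa>0 m) / real m) at_top sequentially"
    then show ?thesis by (rule exists_avoiding_sequence_if_superlinear_trunc_rep)
  next
    assume "\<kappa>0 \<in> range of_nat"
    then obtain n where "\<kappa>0 = of_nat n" by blast
    then show ?thesis
      using p_gt_1 not_in_pow_ideal_of_nat_diff[of n]
      by (intro exists_avoiding_sequence_if_eventually_incongruent[of p "Suc n"]) auto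
  qed
  then show ?thesis unfolding avoiding_sequence_def by blast
qed

end
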